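(* Let $\mathbb{F}$ be a field and $\mathcal{C} \subseteq \mathbb{F}^{m \times n}$ a linear code. Then: (1) if $\dim(\mathcal{C}^\perp) \geq m$, then $\mathcal{C}$ is degenerate if and only if $d_{M,m}(\mathcal{C}^\perp) = 1$; (2) if $d_R(\mathcal{C}^\perp) > 1$, then $\mathcal{C}$ is not degenerate.
   Context: ${\rm Row}(V)$ is the row space and ${\rm Rk}$ the rank. For a subspace $\mathcal{L} \subseteq \mathbb{F}^n$, $\mathcal{V}_\mathcal{L} = \{V \in \mathbb{F}^{m\times n} \mid {\rm Row}(V) \subseteq \mathcal{L}\}$; rank support spaces are sets of this form. $d_{M,r}(\mathcal{D}) = \min\{\dim \mathcal{L} \mid \mathcal{L} \subseteq \mathbb{F}^n, \dim(\mathcal{D} \cap \mathcal{V}_\mathcal{L}) \ge r\}$ and $d_R(\mathcal{D}) = \min\{{\rm Rk}(D) \mid D \in \mathcal{D}, D \ne 0\}$. The dual is $\mathcal{C}^\perp = \{D \mid {\rm Trace}(CD^T) = 0\ \forall C \in \mathcal{C}\}$. Linear codes $\mathcal{C} \subseteq \mathbb{F}^{m\times n}$ and $\mathcal{C}' \subseteq \mathbb{F}^{m\times n'}$ are security equivalent if there exist rank support spaces $\mathcal{V} \supseteq \mathcal{C}$, $\mathcal{W} \supseteq \mathcal{C}'$ and a vector space isomorphism $\phi:\mathcal{V}\to\mathcal{W}$ with $\phi(X) = AXB$ for full-rank $A \in \mathbb{F}^{m\times m}$, $B \in \mathbb{F}^{n\times n'}$, and $\phi(\mathcal{C}) = \mathcal{C}'$.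 $\mathcal{C}$ is degenerate if it is security equivalent to some linear code in $\mathbb{F}^{m\times n'}$ with $n' < n$. *)

theory Defs
  imports "Jordan_Normal_Form.DL_Rank" "HOL-Library.Extended_Nat"
begin

definition mat_dim :: "nat \<Rightarrow> nat \<Rightarrow> 'a::field mat set \<Rightarrow> nat" where
  "mat_dim m n S = vectorspace.dim (class_ring :: 'a ring) ((module_mat TYPE('a) m n)\<lparr>carrier := S\<rparr>)"

definition vec_dim :: "nat \<Rightarrow> 'a::field vec set \<Rightarrow> nat" where
  "vec_dim n L = vectorspace.dim (class_ring :: 'a ring) ((module_vec TYPE('a) n)\<lparr>carrier := L\<rparr>)"

definition linear_code :: "nat \<Rightarrow> nat \<Rightarrow> 'a::field mat set \<Rightarrow> bool" where
  "linear_code m n C \<longleftrightarrow> VectorSpace.subspace (class_ring :: 'a ring) C (module_mat TYPE('a) m n)"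

definition vec_subspace :: "nat \<Rightarrow> 'a::field vec set \<Rightarrow> bool" where
  "vec_subspace n L \<longleftrightarrow> VectorSpace.subspace (class_ring :: 'a ring) L (module_vec TYPE('a) n)"

definition Row :: "'a::field mat \<Rightarrow> 'a vec set" where
  "Row V = vec_space.row_space (dim_col V) V"

definition Rk :: "'a::field mat \<Rightarrow> nat" where
  "Rk A = vec_space.rank (dim_row A) A"

definition mat_trace :: "'a::comm_ring_1 mat \<Rightarrow> 'a" where
  "mat_trace A = (\<Sum>i<dim_row A. A $$ (i, i))"

definition dual_code :: "nat \<Rightarrow> nat \<Rightarrow> 'a::field mat set \<Rightarrow> 'a mat set" where
  "dual_code m n C = {D \<in> carrier_mat m n. \<forall>X \<in> C. mat_trace (X * transpose_mat D) = 0}"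

definition rank_supp :: "nat \<Rightarrow> nat \<Rightarrow> 'a::field vec set \<Rightarrow> 'a mat set" where
  "rank_supp m n L = {V \<in> carrier_mat m n. Row V \<subseteq> L}"

definition is_rank_support_space :: "nat \<Rightarrow> nat \<Rightarrow> 'a::field mat set \<Rightarrow> bool" where
  "is_rank_support_space m n V \<longleftrightarrow> (\<exists>L. vec_subspace n L \<and> V = rank_supp m n L)"

definition d_M :: "nat \<Rightarrow> nat \<Rightarrow> nat \<Rightarrow> 'a::field mat set \<Rightarrow> nat" where
  "d_M m n r D = (LEAST k. \<exists>L. vec_subspace n L \<and> vec_dim n L = k \<and>
        mat_dim m n (D \<inter> rank_supp m n L) \<ge> r)"

text \<open>Minimum rank distance; the minimum over the empty set is infinity.\<close>
definition d_R :: "'a::field mat set \<Rightarrow> enat" where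
  "d_R D = (INF X \<in> {X \<in> D. X \<noteq> 0\<^sub>m (dim_row X) (dim_col X)}. enat (Rk X))"

definition security_equivalent ::
  "nat \<Rightarrow> nat \<Rightarrow> 'a::field mat set \<Rightarrow> nat \<Rightarrow> 'a mat set \<Rightarrow> bool" where
  "security_equivalent m n C n' C' \<longleftrightarrow>
     (\<exists>V W A B. is_rank_support_space m n V \<and> C \<subseteq> V \<and>
        is_rank_support_space m n' W \<and> C' \<subseteq> W \<and>
        A \<in> carrier_mat m m \<and> Rk A = m \<and>
        B \<in> carrier_mat n n' \<and> Rk B = min n n' \<and>
        bij_betw (\<lambda>X. A * X * B) V W \<and>
        (\<lambda>X. A * X * B) ` C = C')"

definition degenerate :: "nat \<Rightarrow> nat \<Rightarrow> 'a::field mat set \<Rightarrow> bool" where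
  "degenerate m n C \<longleftrightarrow>
     (\<exists>n' C'. n' < n \<and> linear_code m n' C' \<and> security_equivalent m n C n' C')"

end

theory Submission
  imports Defs
begin

text \<open>
  Everything reduces to the existence of a common null vector of the code: a nonzero
  v \<in> F^n with X v = 0 for all X \<in> C.

  If C is security equivalent to a code with n' < n columns, the rank support space
  V_L \<supseteq> C has L \<noteq> F^n, since X \<mapsto> A X B is not injective on all of F^(m\<times>n) when B has
  fewer columns than rows; any nonzero w orthogonal to L is then a common null vector.
  Conversely, if v is a common null vector with v_p \<noteq> 0, then C lies in
  V_(v^\<perp>) = {X. X v = 0}, and deleting column p maps this space bijectively onto
  F^(m\<times>(n-1)), because the deleted column is determined by X v = 0; so C is degenerate.

  On the dual side, for a line L = span {v} the elements of C^\<perp> \<inter> V_L are the matrices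
  u v^T with u orthogonal to all X v, X \<in> C. This section has dimension m iff v is a common
  null vector, which gives d_(M,m)(C^\<perp>) = 1 iff a common null vector exists; the
  hypothesis dim C^\<perp> \<ge> m guarantees that the minimum defining d_(M,m) is attained.
  Finally, for a common null vector v the rank-one matrix e_1 v^T lies in C^\<perp>, so
  d_R(C^\<perp>) \<le> 1.
\<close>

section \<open>Subspaces of F^n and rank support spaces\<close>

lemma vec_nonzero_entry:
  fixes v :: "'a::zero vec"
  assumes "v \<in> carrier_vec n" and "v \<noteq> 0\<^sub>v n"
  obtains j where "j < n" and "v $ j \<noteq> 0"
  using assms by (metis carrier_vecD eq_vecI index_zero_vec)

lemma mat_vec_nontrivial_kernel:
  fixes A :: "'a::field mat"
  assumes A: "A \<in> carrier_mat r k" and rk: "r < k"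
  shows "\<exists>v \<in> carrier_vec k. v \<noteq> 0\<^sub>v k \<and> A *\<^sub>v v = 0\<^sub>v r"
proof -
  define c where "c = (\<lambda>i. if i < r then row A i else 0\<^sub>v k)"
  \<comment> \<open>pad A with zero rows to a singular square matrix\<close>
  define A' where "A' = mat\<^sub>r k k (\<lambda>i. if i = k - 1 then 0\<^sub>v k else c i)"
  have c: "c \<in> {0..<k} \<rightarrow> carrier_vec k" using A unfolding c_def by auto
  have "det A' = 0" unfolding A'_def by (rule det_row_0[OF _ c]) (use rk in auto)
  moreover have A'c: "A' \<in> carrier_mat k k" unfolding A'_def by auto
  ultimately obtain v where v: "v \<in> carrier_vec k" "v \<noteq> 0\<^sub>v k" "A' *\<^sub>v v = 0\<^sub>v k"
    using det_0_iff_vec_prod_zero_field[OF A'c] by auto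
  have "A *\<^sub>v v = 0\<^sub>v r"
  proof (rule eq_vecI)
    fix i assume "i < dim_vec (0\<^sub>v r :: 'a vec)"
    hence i: "i < r" by simp
    have "row A i \<bullet> v = (A' *\<^sub>v v) $ i"
      using i rk A unfolding A'_def c_def by (subst index_mult_mat_vec) auto
    with v(3) i rk A show "(A *\<^sub>v v) $ i = (0\<^sub>v r) $ i" by auto
  qed (use A in simp)
  thus ?thesis using v by auto
qed

context vec_space
begin

lemma subspace_basis_card:
  assumes U: "VectorSpace.subspace class_ring U V"
  obtains A where "finite A" "A \<subseteq> U" "lin_indpt A" "span A = U"
    "vectorspace.dim class_ring (vs U) = card A"
proof -
  have sub: "submodule class_ring U V" using U by (simp add: VectorSpace.subspace_def)
  have Uc: "U \<subseteq> carrier_vec n" using sub by (simp add: submodule_def)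
  let ?P = "\<lambda>A. A \<subseteq> U \<and> lin_indpt A"
  have bound: "finite A \<and> card A \<le> n" if "?P A" for A
    using li_le_dim[OF fin_dim, of A] that Uc dim_is_n by auto
  have "lin_indpt {}" unfolding lin_dep_def by auto
  then obtain A where fA: "finite A" and mA: "maximal A ?P"
    using maximal_exists[of ?P n "{}", OF bound] by auto
  have AU: "A \<subseteq> U" and liA: "lin_indpt A" using mA by (auto simp: maximal_def)
  have Ac: "A \<subseteq> carrier_vec n" using AU Uc by auto
  have "U \<subseteq> span A"
  proof
    fix u assume u: "u \<in> U"
    show "u \<in> span A"
    proof (rule ccontr)
      assume nu: "u \<notin> span A"
      have uA: "u \<notin> A" using nu in_own_span[OF Ac] by auto
      have "lin_indpt (A \<union> {u})"
        using lin_dep_iff_in_span[OF _ liA _ uA] Ac u Uc nu by auto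
      hence "A \<union> {u} = A" using mA AU u unfolding maximal_def by auto
      thus False using uA by auto
    qed
  qed
  with span_is_subset[OF AU sub] have span: "span A = U" by blast
  have "maximal A (\<lambda>T. T \<subseteq> A \<and> lin_indpt T)" using liA unfolding maximal_def by auto
  from dim_span[OF Ac fA this] span have "vectorspace.dim class_ring (vs U) = card A" by simp
  with that fA AU liA span show ?thesis by blast
qed

lemma subspace_dim_less:
  assumes U: "VectorSpace.subspace class_ring U V" and proper: "U \<noteq> carrier_vec n"
  shows "vectorspace.dim class_ring (vs U) < n"
proof -
  obtain A where A: "finite A" "A \<subseteq> U" "lin_indpt A" "span A = U"
    and dim: "vectorspace.dim class_ring (vs U) = card A"
    using subspace_basis_card[OF U] .
  have Ac: "A \<subseteq> carrier_vec n" using A(2) U by (auto simp: VectorSpace.subspace_def submodule_def)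
  have "card A \<le> n" using li_le_dim[OF fin_dim Ac A(3)] dim_is_n by simp
  moreover have "card A \<noteq> n"
  proof
    assume "card A = n"
    hence "basis A" using dim_li_is_basis[OF fin_dim A(1) Ac A(3)] dim_is_n by simp
    with A(4) proper show False unfolding basis_def by simp
  qed
  ultimately show ?thesis using dim by simp
qed

lemma subspace_dim_0:
  assumes U: "VectorSpace.subspace class_ring U V" and "vectorspace.dim class_ring (vs U) = 0"
  shows "U = {0\<^sub>v n}"
proof -
  obtain A where "finite A" "span A = U" "vectorspace.dim class_ring (vs U) = card A"
    using subspace_basis_card[OF U] by metis
  with assms(2) show ?thesis using span_empty by simp
qed

lemma subspace_dim_1:
  assumes U: "VectorSpace.subspace class_ring U V" and "vectorspace.dim class_ring (vs U) = 1"
  obtains v where "v \<in> carrier_vec n" "v \<noteq> 0\<^sub>v n" "U = span {v}"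
proof -
  obtain A where A: "A \<subseteq> U" "lin_indpt A" "span A = U" "vectorspace.dim class_ring (vs U) = card A"
    using subspace_basis_card[OF U] by metis
  then obtain v where Av: "A = {v}" using assms(2) card_1_singletonE by metis
  have Ac: "A \<subseteq> carrier_vec n" using A(1) U by (auto simp: VectorSpace.subspace_def submodule_def)
  then have "v \<in> carrier_vec n" using Av by simp
  moreover have "v \<noteq> 0\<^sub>v n" using vs_zero_lin_dep[OF _ A(2)] Ac Av by auto
  ultimately show ?thesis using that A(3) Av by blast
qed

lemma dim_span_single:
  assumes v: "v \<in> carrier_vec n" "v \<noteq> 0\<^sub>v n"
  shows "vectorspace.dim class_ring (vs (span {v})) = 1"
proof -
  have "lin_indpt {v}"
    using lin_dep_iff_in_span[of "{}" v] v span_empty unfolding lin_dep_def by auto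
  moreover have "maximal {v} (\<lambda>T. T \<subseteq> {v} \<and> lin_indpt T)"
    using calculation unfolding maximal_def by auto
  ultimately show ?thesis using dim_span[of "{v}" "{v}"] v by simp
qed

lemma span_single:
  assumes v: "v \<in> carrier_vec n"
  shows "span {v} = range (\<lambda>c. c \<cdot>\<^sub>v v)"
proof (intro equalityI subsetI)
  fix x assume "x \<in> span {v}"
  hence "x \<in> span_list [v]" using span_list_as_span[of "[v]"] v by auto
  then obtain c where "x = lincomb_list c [v]" unfolding span_list_def by auto
  thus "x \<in> range (\<lambda>c. c \<cdot>\<^sub>v v)" using v by (simp add: lincomb_list_def)
next
  fix x assume "x \<in> range (\<lambda>c. c \<cdot>\<^sub>v v)"
  thus "x \<in> span {v}" using smult_in_span[of "{v}"] span_self[of v] v by auto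
qed

lemma orthogonal_complement_subspace:
  assumes "Z \<subseteq> carrier_vec n"
  shows "VectorSpace.subspace class_ring (orthogonal_complement Z) V"
  unfolding VectorSpace.subspace_def submodule_def orthogonal_complement_def
  using assms vec_vs by (auto simp: vec_module add_scalar_prod_distrib smult_scalar_prod_distrib
      module_vec_simps class_ring_simps)

lemma proper_subspace_orthogonal:
  assumes U: "VectorSpace.subspace class_ring U V" and proper: "U \<noteq> carrier_vec n"
  obtains w where "w \<in> carrier_vec n" "w \<noteq> 0\<^sub>v n" "U \<subseteq> orthogonal_complement {w}"
proof -
  obtain A where A: "finite A" "A \<subseteq> U" "span A = U"
    and dim: "vectorspace.dim class_ring (vs U) = card A"
    using subspace_basis_card[OF U] by metis
  have Ac: "A \<subseteq> carrier_vec n" using A(2) U by (auto simp: VectorSpace.subspace_def submodule_def)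
  obtain as where as: "set as = A" "distinct as" using finite_distinct_list[OF A(1)] by auto
  have M: "mat_of_rows n as \<in> carrier_mat (card A) n" using as distinct_card by fastforce
  have "card A < n" using subspace_dim_less[OF U proper] dim by simp
  then obtain w where w: "w \<in> carrier_vec n" "w \<noteq> 0\<^sub>v n" "mat_of_rows n as *\<^sub>v w = 0\<^sub>v (card A)"
    using mat_vec_nontrivial_kernel[OF M] by auto
  have "A \<subseteq> orthogonal_complement {w}"
  proof
    fix a assume a: "a \<in> A"
    then obtain i where i: "i < length as" "as ! i = a" using as(1) by (metis in_set_conv_nth)
    have "a \<bullet> w = (mat_of_rows n as *\<^sub>v w) $ i"
      using i Ac a by (subst index_mult_mat_vec) (auto simp: mat_of_rows_row)
    also have "\<dots> = 0" using w(3) i as distinct_card by fastforce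
    finally show "a \<in> orthogonal_complement {w}"
      using a Ac unfolding orthogonal_complement_def by auto
  qed
  hence "span A \<subseteq> orthogonal_complement {w}"
    using orthogonal_complement_subspace[of "{w}"] w(1)
    by (intro span_is_subset) (auto simp: VectorSpace.subspace_def)
  thus ?thesis using that A(3) w by blast
qed

lemma row_space_subset_iff:
  assumes X: "X \<in> carrier_mat m n" and L: "VectorSpace.subspace class_ring L V"
  shows "row_space X \<subseteq> L \<longleftrightarrow> (\<forall>i<m. row X i \<in> L)"
proof -
  have sub: "submodule class_ring L V" using L by (simp add: VectorSpace.subspace_def)
  have rc: "set (rows X) \<subseteq> carrier_vec n" using X by (auto simp: rows_def)
  have rs: "set (rows X) = {row X i | i. i < m}" using X by (auto simp: rows_def)
  show ?thesis
  proof
    assume "row_space X \<subseteq> L"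
    thus "\<forall>i<m. row X i \<in> L" using in_own_span[OF rc] rs unfolding row_space_def by auto
  next
    assume "\<forall>i<m. row X i \<in> L"
    hence "set (rows X) \<subseteq> L" using rs by auto
    thus "row_space X \<subseteq> L" unfolding row_space_def by (rule span_is_subset[OF _ sub])
  qed
qed

end

abbreviation vspan :: "nat \<Rightarrow> 'a::field vec set \<Rightarrow> 'a vec set" where
  "vspan n S \<equiv> LinearCombinations.module.span class_ring (module_vec TYPE('a) n) S"

lemma vec_subspace_carrier: "vec_subspace n (carrier_vec n :: 'a::field vec set)"
  unfolding vec_subspace_def using vec_space.orthogonal_complement_subspace[of "{}" n]
  by (simp add: vec_module.orthogonal_complement_def)

lemma vec_subspace_zero: "vec_subspace n {0\<^sub>v n :: 'a::field vec}"
proof -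
  interpret vec_space "TYPE('a)" n .
  show ?thesis unfolding vec_subspace_def using span_is_subspace[of "{}"] span_empty by simp
qed

lemma vec_subspace_span_single:
  fixes v :: "'a::field vec"
  assumes "v \<in> carrier_vec n"
  shows "vec_subspace n (vspan n {v})"
proof -
  interpret vec_space "TYPE('a)" n .
  show ?thesis unfolding vec_subspace_def using span_is_subspace[of "{v}"] assms by simp
qed

lemma vec_dim_carrier: "vec_dim n (carrier_vec n :: 'a::field vec set) = n"
  unfolding vec_dim_def using vec_space.dim_is_n by (simp add: module_vec_def)

lemma vec_dim_less:
  assumes "vec_subspace n U" and "U \<noteq> carrier_vec n"
  shows "vec_dim n U < n"
  using vec_space.subspace_dim_less assms unfolding vec_subspace_def vec_dim_def by blast

lemma vec_dim_span_single:
  fixes v :: "'a::field vec"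
  assumes "v \<in> carrier_vec n" and "v \<noteq> 0\<^sub>v n"
  shows "vec_dim n (vspan n {v}) = 1"
  unfolding vec_dim_def by (rule vec_space.dim_span_single[OF assms])

lemma Row_subset_iff:
  assumes X: "X \<in> carrier_mat m n" and L: "vec_subspace n L"
  shows "Row X \<subseteq> L \<longleftrightarrow> (\<forall>i<m. row X i \<in> L)"
  using vec_space.row_space_subset_iff[OF X L[unfolded vec_subspace_def]] X
  unfolding Row_def by simp

lemma rank_supp_carrier: "rank_supp m n (carrier_vec n) = (carrier_mat m n :: 'a::field mat set)"
proof -
  have "Row X \<subseteq> carrier_vec n" if X: "X \<in> carrier_mat m n" for X :: "'a mat"
    using Row_subset_iff[OF X vec_subspace_carrier] X by simp
  thus ?thesis unfolding rank_supp_def by auto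
qed

lemma rank_supp_zero: "rank_supp m n {0\<^sub>v n} = {0\<^sub>m m n :: 'a::field mat}"
proof -
  have "X \<in> carrier_mat m n \<and> Row X \<subseteq> {0\<^sub>v n} \<longleftrightarrow> X = 0\<^sub>m m n" for X :: "'a mat"
  proof (cases "X \<in> carrier_mat m n")
    case True
    hence "Row X \<subseteq> {0\<^sub>v n} \<longleftrightarrow> (\<forall>i<m. row X i = 0\<^sub>v n)"
      using Row_subset_iff[OF _ vec_subspace_zero] by blast
    also have "\<dots> \<longleftrightarrow> X = 0\<^sub>m m n"
      using True by (auto simp: vec_eq_iff mat_eq_iff)
    finally show ?thesis using True by simp
  qed auto
  thus ?thesis unfolding rank_supp_def by simp
qed

lemma rank_supp_orthogonal_complement:
  assumes Z: "Z \<subseteq> carrier_vec n"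
  shows "rank_supp m n (vec_module.orthogonal_complement n Z)
    = {X \<in> carrier_mat m n. \<forall>z\<in>Z. X *\<^sub>v z = (0\<^sub>v m :: 'a::field vec)}"
proof -
  have L: "vec_subspace n (vec_module.orthogonal_complement n Z :: 'a vec set)"
    unfolding vec_subspace_def by (rule vec_space.orthogonal_complement_subspace[OF Z])
  have "Row X \<subseteq> vec_module.orthogonal_complement n Z \<longleftrightarrow> (\<forall>z\<in>Z. X *\<^sub>v z = 0\<^sub>v m)"
    if X: "X \<in> carrier_mat m n" for X :: "'a mat"
  proof -
    have "Row X \<subseteq> vec_module.orthogonal_complement n Z
        \<longleftrightarrow> (\<forall>i<m. row X i \<in> vec_module.orthogonal_complement n Z)"
      by (rule Row_subset_iff[OF X L])
    also have "\<dots> \<longleftrightarrow> (\<forall>z\<in>Z. X *\<^sub>v z = 0\<^sub>v m)"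
      using X by (auto simp: vec_module.orthogonal_complement_def vec_eq_iff)
    finally show ?thesis .
  qed
  thus ?thesis unfolding rank_supp_def by auto
qed

lemma orthogonal_complement_eq_carrier_iff:
  fixes Z :: "'a::field vec set"
  assumes Z: "Z \<subseteq> carrier_vec n"
  shows "vec_module.orthogonal_complement n Z = carrier_vec n \<longleftrightarrow> Z \<subseteq> {0\<^sub>v n}"
proof
  assume full: "vec_module.orthogonal_complement n Z = carrier_vec n"
  show "Z \<subseteq> {0\<^sub>v n}"
  proof
    fix z assume z: "z \<in> Z"
    have "z $ i = 0" if i: "i < n" for i
    proof -
      have "unit_vec n i \<in> vec_module.orthogonal_complement n Z" using full i by simp
      hence "unit_vec n i \<bullet> z = 0" using z unfolding vec_module.orthogonal_complement_def by blast
      thus ?thesis using scalar_prod_left_unit[of z n i] z Z i by auto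
    qed
    moreover have "z \<in> carrier_vec n" using z Z by blast
    ultimately show "z \<in> {0\<^sub>v n}" by (auto intro: eq_vecI)
  qed
qed (auto simp: vec_module.orthogonal_complement_def)

section \<open>Rank-one matrices\<close>

definition outer_prod_mat :: "'a::comm_ring_1 vec \<Rightarrow> 'a vec \<Rightarrow> 'a mat" where
  "outer_prod_mat u v = mat (dim_vec u) (dim_vec v) (\<lambda>(i, j). u $ i * v $ j)"

lemma outer_prod_mat_carrier [simp]:
  "u \<in> carrier_vec m \<Longrightarrow> v \<in> carrier_vec n \<Longrightarrow> outer_prod_mat u v \<in> carrier_mat m n"
  unfolding outer_prod_mat_def by auto

lemma outer_prod_mat_dims [simp]:
  "dim_row (outer_prod_mat u v) = dim_vec u" "dim_col (outer_prod_mat u v) = dim_vec v"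
  unfolding outer_prod_mat_def by auto

lemma index_outer_prod_mat [simp]:
  "i < dim_vec u \<Longrightarrow> j < dim_vec v \<Longrightarrow> outer_prod_mat u v $$ (i, j) = u $ i * v $ j"
  unfolding outer_prod_mat_def by auto

lemma row_outer_prod_mat:
  "i < dim_vec u \<Longrightarrow> row (outer_prod_mat u v) i = u $ i \<cdot>\<^sub>v v"
  by (auto intro!: eq_vecI)

lemma outer_prod_mat_add:
  "x \<in> carrier_vec m \<Longrightarrow> y \<in> carrier_vec m \<Longrightarrow>
    outer_prod_mat (x + y) v = outer_prod_mat x v + outer_prod_mat y v"
  by (rule eq_matI) (auto simp: ring_distribs)

lemma outer_prod_mat_smult: "outer_prod_mat (r \<cdot>\<^sub>v x) v = r \<cdot>\<^sub>m outer_prod_mat x v"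
  by (rule eq_matI) auto

lemma outer_prod_mat_zero_left [simp]: "outer_prod_mat (0\<^sub>v m) v = 0\<^sub>m m (dim_vec v)"
  by (rule eq_matI) auto

lemma outer_prod_mat_zero_right [simp]: "outer_prod_mat u (0\<^sub>v n) = 0\<^sub>m (dim_vec u) n"
  by (rule eq_matI) auto

lemma outer_prod_mat_inj:
  fixes u :: "'a::idom vec"
  assumes "v \<noteq> 0\<^sub>v n" "v \<in> carrier_vec n" "u \<in> carrier_vec m" "u' \<in> carrier_vec m"
    and eq: "outer_prod_mat u v = outer_prod_mat u' v"
  shows "u = u'"
proof -
  obtain j where j: "j < n" "v $ j \<noteq> 0" using vec_nonzero_entry assms(1,2) by blast
  have "u $ i * v $ j = u' $ i * v $ j" if "i < m" for i
    using arg_cong[OF eq, of "\<lambda>X. X $$ (i, j)"] that j assms(2-4) by simp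
  thus ?thesis using j assms(3,4) by (intro eq_vecI) auto
qed

lemma outer_prod_mat_nonzero:
  fixes u :: "'a::idom vec"
  assumes "u \<in> carrier_vec m" "u \<noteq> 0\<^sub>v m" "v \<in> carrier_vec n" "v \<noteq> 0\<^sub>v n"
  shows "outer_prod_mat u v \<noteq> 0\<^sub>m m n"
proof
  assume "outer_prod_mat u v = 0\<^sub>m m n"
  hence "outer_prod_mat u v = outer_prod_mat (0\<^sub>v m) v" using assms(3) by simp
  hence "u = 0\<^sub>v m" by (rule outer_prod_mat_inj[OF assms(4,3,1) zero_carrier_vec])
  with assms(2) show False ..
qed

lemma outer_prod_mat_mult:
  assumes B: "B \<in> carrier_mat n n'" and x: "x \<in> carrier_vec n"
  shows "outer_prod_mat u x * B = outer_prod_mat u (transpose_mat B *\<^sub>v x)"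
proof (rule eq_matI)
  fix i l assume "i < dim_row (outer_prod_mat u (transpose_mat B *\<^sub>v x))"
    "l < dim_col (outer_prod_mat u (transpose_mat B *\<^sub>v x))"
  hence il: "i < dim_vec u" "l < n'" using B by auto
  have "(outer_prod_mat u x * B) $$ (i, l) = (\<Sum>j<n. u $ i * x $ j * B $$ (j, l))"
    using il B x by (simp add: scalar_prod_def atLeast0LessThan)
  also have "\<dots> = u $ i * (\<Sum>j<n. B $$ (j, l) * x $ j)"
    by (simp add: sum_distrib_left ac_simps)
  finally show "(outer_prod_mat u x * B) $$ (i, l) = outer_prod_mat u (transpose_mat B *\<^sub>v x) $$ (i, l)"
    using il B x by (simp add: scalar_prod_def atLeast0LessThan)
qed (use B in simp_all)

lemma mult_outer_prod_mat:
  assumes X: "X \<in> carrier_mat m n" and u: "u \<in> carrier_vec n"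
  shows "X * outer_prod_mat u w = outer_prod_mat (X *\<^sub>v u) w"
proof (rule eq_matI)
  fix i j assume "i < dim_row (outer_prod_mat (X *\<^sub>v u) w)" "j < dim_col (outer_prod_mat (X *\<^sub>v u) w)"
  hence ij: "i < m" "j < dim_vec w" using X by auto
  have "(X * outer_prod_mat u w) $$ (i, j) = (\<Sum>l<n. X $$ (i, l) * (u $ l * w $ j))"
    using ij X u by (simp add: scalar_prod_def atLeast0LessThan)
  also have "\<dots> = (\<Sum>l<n. X $$ (i, l) * u $ l) * w $ j"
    by (simp add: sum_distrib_right mult.assoc)
  finally show "(X * outer_prod_mat u w) $$ (i, j) = outer_prod_mat (X *\<^sub>v u) w $$ (i, j)"
    using ij X u by (simp add: scalar_prod_def atLeast0LessThan)
qed (use X u in simp_all)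

lemma trace_mult_transpose_outer_prod_mat:
  fixes X :: "'a::comm_ring_1 mat"
  assumes X: "X \<in> carrier_mat m n" and u: "u \<in> carrier_vec m" and v: "v \<in> carrier_vec n"
  shows "mat_trace (X * transpose_mat (outer_prod_mat u v)) = u \<bullet> (X *\<^sub>v v)"
proof -
  have "mat_trace (X * transpose_mat (outer_prod_mat u v)) = (\<Sum>i<m. \<Sum>j<n. X $$ (i, j) * (u $ i * v $ j))"
    using X u v unfolding mat_trace_def by (auto simp: scalar_prod_def atLeast0LessThan intro!: sum.cong)
  also have "\<dots> = (\<Sum>i<m. u $ i * (\<Sum>j<n. X $$ (i, j) * v $ j))"
    by (auto simp: sum_distrib_left ac_simps intro!: sum.cong)
  also have "\<dots> = u \<bullet> (X *\<^sub>v v)"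
    using u v X by (simp add: scalar_prod_def atLeast0LessThan ac_simps)
  finally show ?thesis .
qed

lemma Rk_outer_prod_mat: "Rk (outer_prod_mat u v :: 'a::field mat) \<le> 1"
  unfolding Rk_def
  by (rule vec_space.rank_le_1_product_entries[of _ _ "dim_vec v" "\<lambda>i. u $ i" "\<lambda>j. v $ j"]) auto

lemma rank_supp_span_single:
  fixes v :: "'a::field vec"
  assumes v: "v \<in> carrier_vec n"
  shows "rank_supp m n (vspan n {v}) = (\<lambda>u. outer_prod_mat u v) ` carrier_vec m"
proof (intro equalityI subsetI)
  have L: "vec_subspace n (vspan n {v})" by (rule vec_subspace_span_single[OF v])
  have span: "vspan n {v} = range (\<lambda>c. c \<cdot>\<^sub>v v)" by (rule vec_space.span_single[OF v])
  {
    fix X assume "X \<in> rank_supp m n (vspan n {v})"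
    hence X: "X \<in> carrier_mat m n" and "Row X \<subseteq> vspan n {v}" unfolding rank_supp_def by auto
    hence "\<forall>i<m. \<exists>c. row X i = c \<cdot>\<^sub>v v" using Row_subset_iff[OF X L] span by auto
    then obtain f where f: "\<And>i. i < m \<Longrightarrow> row X i = f i \<cdot>\<^sub>v v" by metis
    have "X = outer_prod_mat (vec m f) v"
    proof (rule eq_matI)
      fix i j assume "i < dim_row (outer_prod_mat (vec m f) v)" "j < dim_col (outer_prod_mat (vec m f) v)"
      hence ij: "i < m" "j < n" using v by auto
      have "X $$ (i, j) = row X i $ j" using X ij by simp
      thus "X $$ (i, j) = outer_prod_mat (vec m f) v $$ (i, j)" using f[OF ij(1)] ij v by simp
    qed (use X v in auto)
    thus "X \<in> (\<lambda>u. outer_prod_mat u v) ` carrier_vec m" by auto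
  }
  {
    fix X assume "X \<in> (\<lambda>u. outer_prod_mat u v) ` carrier_vec m"
    then obtain u where u: "u \<in> carrier_vec m" and X: "X = outer_prod_mat u v" by auto
    have Xc: "X \<in> carrier_mat m n" using u v X by simp
    have "\<forall>i<m. row X i \<in> vspan n {v}" using u unfolding X span by (auto simp: row_outer_prod_mat)
    thus "X \<in> rank_supp m n (vspan n {v})"
      unfolding rank_supp_def using Row_subset_iff[OF Xc L] Xc by blast
  }
qed

section \<open>Sections of the dual code\<close>

definition common_null_vector :: "nat \<Rightarrow> nat \<Rightarrow> 'a::field mat set \<Rightarrow> 'a vec \<Rightarrow> bool" where
  "common_null_vector m n C v \<longleftrightarrow> v \<in> carrier_vec n \<and> v \<noteq> 0\<^sub>v n \<and> (\<forall>X\<in>C. X *\<^sub>v v = 0\<^sub>v m)"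

lemma dual_code_carrier: "dual_code m n C \<subseteq> carrier_mat m n"
  unfolding dual_code_def by auto

lemma zero_mem_dual_code: "C \<subseteq> carrier_mat m n \<Longrightarrow> 0\<^sub>m m n \<in> dual_code m n C"
  unfolding dual_code_def mat_trace_def by auto

lemma linear_code_carrier: "linear_code m n C \<Longrightarrow> C \<subseteq> carrier_mat m n"
  unfolding linear_code_def VectorSpace.subspace_def submodule_def by (simp add: module_mat_simps)

lemma outer_prod_mat_mem_dual_code:
  fixes C :: "'a::field mat set"
  assumes C: "C \<subseteq> carrier_mat m n" and u: "u \<in> carrier_vec m" and v: "v \<in> carrier_vec n"
  shows "outer_prod_mat u v \<in> dual_code m n C \<longleftrightarrow> (\<forall>X\<in>C. u \<bullet> (X *\<^sub>v v) = 0)"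
proof -
  have "\<forall>X\<in>C. mat_trace (X * transpose_mat (outer_prod_mat u v)) = u \<bullet> (X *\<^sub>v v)"
    using trace_mult_transpose_outer_prod_mat[OF _ u v] C by blast
  thus ?thesis unfolding dual_code_def using u v by simp
qed

lemma dual_code_inter_rank_supp_span_single:
  fixes C :: "'a::field mat set"
  assumes C: "C \<subseteq> carrier_mat m n" and v: "v \<in> carrier_vec n"
  shows "dual_code m n C \<inter> rank_supp m n (vspan n {v})
    = (\<lambda>u. outer_prod_mat u v) ` vec_module.orthogonal_complement m ((\<lambda>X. X *\<^sub>v v) ` C)"
proof -
  have "dual_code m n C \<inter> (\<lambda>u. outer_prod_mat u v) ` carrier_vec m
      = (\<lambda>u. outer_prod_mat u v) ` {u \<in> carrier_vec m. outer_prod_mat u v \<in> dual_code m n C}"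
    by blast
  also have "{u \<in> carrier_vec m. outer_prod_mat u v \<in> dual_code m n C}
      = vec_module.orthogonal_complement m ((\<lambda>X. X *\<^sub>v v) ` C)"
    unfolding vec_module.orthogonal_complement_def
    using outer_prod_mat_mem_dual_code[OF C _ v] by blast
  finally show ?thesis unfolding rank_supp_span_single[OF v] .
qed

lemma mat_dim_zero: "mat_dim m n {0\<^sub>m m n :: 'a::field mat} = 0"
proof -
  let ?M = "module_mat TYPE('a) m n"
  let ?Z = "?M\<lparr>carrier := {0\<^sub>m m n}\<rparr>"
  interpret M: vectorspace class_ring ?M by (rule matrix_vs)
  have "VectorSpace.subspace class_ring {0\<^sub>m m n} ?M"
    using M.span_is_subspace[of "{}"] M.span_empty by (simp add: module_mat_simps)
  then interpret Z: vectorspace class_ring ?Z by (rule M.subspace_is_vs)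
  have "Z.span {\<zero>\<^bsub>?Z\<^esub>} = carrier ?Z"
    using Z.span_zero Z.span_closed[of "{\<zero>\<^bsub>?Z\<^esub>}"] by (auto simp: module_mat_simps)
  thus ?thesis unfolding mat_dim_def by (rule vectorspace.dim0I[OF Z.vectorspace_axioms])
qed

lemma mat_dim_outer_prod_mat_image:
  fixes v :: "'a::field vec"
  assumes v: "v \<in> carrier_vec n" "v \<noteq> 0\<^sub>v n" and U: "vec_subspace m U"
  shows "mat_dim m n ((\<lambda>u. outer_prod_mat u v) ` U) = vec_dim m U"
proof -
  interpret VS: vec_space "TYPE('a)" m .
  let ?T = "\<lambda>u. outer_prod_mat u v"
  have Usub: "VectorSpace.subspace class_ring U VS.V" using U unfolding vec_subspace_def .
  have Uc: "U \<subseteq> carrier_vec m" using Usub by (simp add: VectorSpace.subspace_def submodule_def)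
  have vsU: "vectorspace class_ring (VS.vs U)" using VS.subspace_is_vs[OF Usub] .
  have hom: "?T \<in> LinearCombinations.module_hom class_ring (VS.vs U) (module_mat TYPE('a) m n)"
    unfolding LinearCombinations.module_hom_def
    using Uc v by (auto simp: module_mat_simps module_vec_simps outer_prod_mat_smult
        outer_prod_mat_add[OF subsetD[OF Uc] subsetD[OF Uc]])
  interpret T: linear_map class_ring "VS.vs U" "module_mat TYPE('a) m n" ?T
    using vsU matrix_vs hom
    unfolding linear_map_def mod_hom_def mod_hom_axioms_def vectorspace_def by blast
  obtain A where "finite A" "A \<subseteq> U" "VS.span A = U"
    using VS.subspace_basis_card[OF Usub] by metis
  hence fin: "vectorspace.fin_dim class_ring (VS.vs U)"
    using VS.fin_dim_span[of A] Uc by auto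
  have "inj_on ?T (carrier (VS.vs U))"
    unfolding inj_on_def using outer_prod_mat_inj[OF v(2,1), of _ m] Uc by auto
  hence "vectorspace.dim class_ring (VS.vs U\<lparr>carrier := T.kerT\<rparr>) = 0"
    by (rule T.inj_imp_dim_ker0)
  moreover have "T.imT = ?T ` U" unfolding T.im_def by simp
  ultimately show ?thesis
    using T.rank_nullity[OF fin] unfolding mat_dim_def vec_dim_def by simp
qed

lemma mat_dim_dual_code_inter_rank_supp_span_single:
  fixes C :: "'a::field mat set"
  assumes C: "C \<subseteq> carrier_mat m n" and v: "v \<in> carrier_vec n" "v \<noteq> 0\<^sub>v n"
  shows "mat_dim m n (dual_code m n C \<inter> rank_supp m n (vspan n {v}))
    = vec_dim m (vec_module.orthogonal_complement m ((\<lambda>X. X *\<^sub>v v) ` C))"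
proof -
  have "(\<lambda>X. X *\<^sub>v v) ` C \<subseteq> carrier_vec m" using C v by auto
  hence "vec_subspace m (vec_module.orthogonal_complement m ((\<lambda>X. X *\<^sub>v v) ` C))"
    unfolding vec_subspace_def by (rule vec_space.orthogonal_complement_subspace)
  thus ?thesis
    unfolding dual_code_inter_rank_supp_span_single[OF C v(1)]
    by (rule mat_dim_outer_prod_mat_image[OF v])
qed

lemma d_M_witness:
  fixes D :: "'a::field mat set"
  assumes "D \<subseteq> carrier_mat m n" and "r \<le> mat_dim m n D"
  obtains L where "vec_subspace n L" "vec_dim n L = d_M m n r D"
    "r \<le> mat_dim m n (D \<inter> rank_supp m n L)"
proof -
  let ?P = "\<lambda>k. \<exists>L. vec_subspace n L \<and> vec_dim n L = k \<and> r \<le> mat_dim m n (D \<inter> rank_supp m n L)"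
  have "D \<inter> rank_supp m n (carrier_vec n) = D" using assms(1) rank_supp_carrier by blast
  hence "?P n" using vec_subspace_carrier vec_dim_carrier assms(2) by metis
  hence "?P (d_M m n r D)" unfolding d_M_def by (rule LeastI)
  thus ?thesis using that by blast
qed

lemma d_M_eq_1I:
  fixes D :: "'a::field mat set"
  assumes r: "0 < r" and D: "0\<^sub>m m n \<in> D"
    and L: "vec_subspace n L" "vec_dim n L = 1" "r \<le> mat_dim m n (D \<inter> rank_supp m n L)"
  shows "d_M m n r D = 1"
  unfolding d_M_def
proof (rule Least_equality)
  show "\<exists>L. vec_subspace n L \<and> vec_dim n L = 1 \<and> r \<le> mat_dim m n (D \<inter> rank_supp m n L)"
    using L by blast
next
  fix k assume "\<exists>L. vec_subspace n L \<and> vec_dim n L = k \<and> r \<le> mat_dim m n (D \<inter> rank_supp m n L)"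
  then obtain L' where L': "vec_subspace n L'" "vec_dim n L' = k"
    "r \<le> mat_dim m n (D \<inter> rank_supp m n L')" by blast
  show "1 \<le> k"
  proof (rule ccontr)
    assume "\<not> 1 \<le> k"
    hence "vec_dim n L' = 0" using L'(2) by simp
    hence "L' = {0\<^sub>v n}"
      using vec_space.subspace_dim_0[of L' n] L'(1) unfolding vec_subspace_def vec_dim_def by blast
    hence "D \<inter> rank_supp m n L' = {0\<^sub>m m n}" using rank_supp_zero D by auto
    thus False using L'(3) r by (simp add: mat_dim_zero)
  qed
qed

lemma d_M_dual_code_eq_1_iff:
  fixes C :: "'a::field mat set"
  assumes C: "C \<subseteq> carrier_mat m n" and m: "0 < m" and dim: "m \<le> mat_dim m n (dual_code m n C)"
  shows "d_M m n m (dual_code m n C) = 1 \<longleftrightarrow> (\<exists>v. common_null_vector m n C v)"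
proof
  assume "d_M m n m (dual_code m n C) = 1"
  then obtain L where L: "vec_subspace n L" "vec_dim n L = 1"
    and sec: "m \<le> mat_dim m n (dual_code m n C \<inter> rank_supp m n L)"
    using d_M_witness[OF dual_code_carrier dim] by metis
  obtain v where v: "v \<in> carrier_vec n" "v \<noteq> 0\<^sub>v n" and Lv: "L = vspan n {v}"
    using vec_space.subspace_dim_1 L unfolding vec_subspace_def vec_dim_def by metis
  let ?Z = "(\<lambda>X. X *\<^sub>v v) ` C"
  have Z: "?Z \<subseteq> carrier_vec m" using C v by auto
  have "m \<le> vec_dim m (vec_module.orthogonal_complement m ?Z)"
    using sec mat_dim_dual_code_inter_rank_supp_span_single[OF C v] Lv by simp
  hence "vec_module.orthogonal_complement m ?Z = carrier_vec m"
    using vec_dim_less vec_space.orthogonal_complement_subspace[OF Z]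
    unfolding vec_subspace_def by fastforce
  hence "\<forall>X\<in>C. X *\<^sub>v v = 0\<^sub>v m" using orthogonal_complement_eq_carrier_iff[OF Z] by blast
  thus "\<exists>v. common_null_vector m n C v" using v unfolding common_null_vector_def by blast
next
  assume "\<exists>v. common_null_vector m n C v"
  then obtain v where v: "v \<in> carrier_vec n" "v \<noteq> 0\<^sub>v n" and null: "\<forall>X\<in>C. X *\<^sub>v v = 0\<^sub>v m"
    unfolding common_null_vector_def by blast
  let ?Z = "(\<lambda>X. X *\<^sub>v v) ` C"
  have "?Z \<subseteq> carrier_vec m" and "?Z \<subseteq> {0\<^sub>v m}" using C v null by auto
  hence "vec_module.orthogonal_complement m ?Z = carrier_vec m"
    using orthogonal_complement_eq_carrier_iff by blast
  hence "mat_dim m n (dual_code m n C \<inter> rank_supp m n (vspan n {v})) = m"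
    using mat_dim_dual_code_inter_rank_supp_span_single[OF C v] vec_dim_carrier by simp
  thus "d_M m n m (dual_code m n C) = 1"
    using d_M_eq_1I[OF m zero_mem_dual_code[OF C] vec_subspace_span_single[OF v(1)]
        vec_dim_span_single[OF v]] by simp
qed

lemma d_R_dual_code_le_1:
  fixes C :: "'a::field mat set"
  assumes C: "C \<subseteq> carrier_mat m n" and m: "0 < m" and null: "common_null_vector m n C v"
  shows "d_R (dual_code m n C) \<le> 1"
proof -
  have v: "v \<in> carrier_vec n" "v \<noteq> 0\<^sub>v n" and Cv: "\<forall>X\<in>C. X *\<^sub>v v = 0\<^sub>v m"
    using null unfolding common_null_vector_def by auto
  define e :: "'a vec" where "e = unit_vec m 0"
  have e: "e \<in> carrier_vec m" "e \<noteq> 0\<^sub>v m"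
    using m unfolding e_def by (auto simp: vec_eq_iff)
  define X where "X = outer_prod_mat e v"
  have "X \<in> dual_code m n C"
    unfolding X_def using outer_prod_mat_mem_dual_code[OF C e(1) v(1)] Cv e(1) by simp
  moreover have "X \<noteq> 0\<^sub>m (dim_row X) (dim_col X)"
    using outer_prod_mat_nonzero[OF e v] e(1) v(1) unfolding X_def by simp
  ultimately have "d_R (dual_code m n C) \<le> enat (Rk X)"
    unfolding d_R_def by (intro INF_lower) simp
  also have "\<dots> \<le> 1" using Rk_outer_prod_mat[of e v] unfolding X_def one_enat_def by simp
  finally show ?thesis .
qed

section \<open>Degenerate codes\<close>

lemma mult_right_not_inj_on_carrier:
  fixes A B :: "'a::field mat"
  assumes m: "0 < m" and A: "A \<in> carrier_mat m m" and B: "B \<in> carrier_mat n n'" and n': "n' < n"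
  shows "\<not> inj_on (\<lambda>X. A * X * B) (carrier_mat m n)"
proof
  assume inj: "inj_on (\<lambda>X. A * X * B) (carrier_mat m n)"
  obtain x where x: "x \<in> carrier_vec n" "x \<noteq> 0\<^sub>v n" "transpose_mat B *\<^sub>v x = 0\<^sub>v n'"
    using mat_vec_nontrivial_kernel[of "transpose_mat B" n' n] B n' by auto
  define e :: "'a vec" where "e = unit_vec m 0"
  have e: "e \<in> carrier_vec m" "e \<noteq> 0\<^sub>v m"
    using m unfolding e_def by (auto simp: vec_eq_iff)
  have "A * outer_prod_mat e x * B = A * (outer_prod_mat e x * B)"
    using A B e x by (intro assoc_mult_mat) auto
  also have "\<dots> = A * 0\<^sub>m m n * B"
    using A B e by (simp add: outer_prod_mat_mult[OF B x(1)] x(3))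
  finally have "outer_prod_mat e x = 0\<^sub>m m n"
    using inj_onD[OF inj] e x by simp
  with outer_prod_mat_nonzero[OF e x(1,2)] show False ..
qed

lemma common_null_vector_if_degenerate:
  fixes C :: "'a::field mat set"
  assumes m: "0 < m" and "degenerate m n C"
  shows "\<exists>v. common_null_vector m n C v"
proof -
  obtain n' C' V W A B where n': "n' < n" and V: "is_rank_support_space m n V" and CV: "C \<subseteq> V"
    and A: "A \<in> carrier_mat m m" and B: "B \<in> carrier_mat n n'"
    and bij: "bij_betw (\<lambda>X. A * X * B) V W"
    using assms(2) unfolding degenerate_def security_equivalent_def by blast
  obtain L where L: "vec_subspace n L" and VL: "V = rank_supp m n L"
    using V unfolding is_rank_support_space_def by blast
  have "L \<noteq> carrier_vec n"
    using bij_betw_imp_inj_on[OF bij] mult_right_not_inj_on_carrier[OF m A B n'] VL rank_supp_carrier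
    by metis
  then obtain w where w: "w \<in> carrier_vec n" "w \<noteq> 0\<^sub>v n" "L \<subseteq> vec_module.orthogonal_complement n {w}"
    using vec_space.proper_subspace_orthogonal L unfolding vec_subspace_def by metis
  have "C \<subseteq> rank_supp m n (vec_module.orthogonal_complement n {w})"
    using CV VL w(3) unfolding rank_supp_def by auto
  hence "\<forall>X\<in>C. X *\<^sub>v w = 0\<^sub>v m" using rank_supp_orthogonal_complement[of "{w}" n m] w(1) by auto
  thus ?thesis using w(1,2) unfolding common_null_vector_def by blast
qed

text \<open>Right multiplication by del deletes column p; right multiplication by ins puts a column
  back at position p, chosen so that the result annihilates v.\<close>

locale column_deletion =
  fixes n p :: nat and v :: "'a::field vec"
  assumes p: "p < n" and v: "v \<in> carrier_vec n" and v_p: "v $ p \<noteq> 0"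
begin

definition skip :: "nat \<Rightarrow> nat" where "skip k = (if k < p then k else Suc k)"

definition unskip :: "nat \<Rightarrow> nat" where "unskip j = (if j < p then j else j - 1)"

lemma skip_less: "k < n - 1 \<Longrightarrow> skip k < n"
  using p unfolding skip_def by auto

lemma skip_neq: "skip k \<noteq> p"
  unfolding skip_def by auto

lemma skip_inj: "skip k = skip k' \<Longrightarrow> k = k'"
  unfolding skip_def by (auto split: if_splits)

lemma skip_eq_iff: "j < n \<Longrightarrow> k < n - 1 \<Longrightarrow> j = skip k \<longleftrightarrow> j \<noteq> p \<and> k = unskip j"
  using p unfolding skip_def unskip_def by auto

lemma unskip_less: "j < n \<Longrightarrow> j \<noteq> p \<Longrightarrow> unskip j < n - 1"
  using p unfolding unskip_def by auto

lemma skip_unskip: "j \<noteq> p \<Longrightarrow> skip (unskip j) = j"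
  unfolding skip_def unskip_def by auto

definition del :: "'a mat" where
  "del = mat n (n - 1) (\<lambda>(j, k). if j = skip k then 1 else 0)"

definition ins :: "'a mat" where
  "ins = mat (n - 1) n (\<lambda>(k, j).
     (if j = skip k then 1 else 0) - (if j = p then v $ skip k / v $ p else 0))"

lemma del_carrier [simp]: "del \<in> carrier_mat n (n - 1)"
  and dim_del [simp]: "dim_row del = n" "dim_col del = n - 1"
  and index_del [simp]: "j < n \<Longrightarrow> k < n - 1 \<Longrightarrow> del $$ (j, k) = (if j = skip k then 1 else 0)"
  unfolding del_def by simp_all

lemma ins_carrier [simp]: "ins \<in> carrier_mat (n - 1) n"
  and dim_ins [simp]: "dim_row ins = n - 1" "dim_col ins = n"
  unfolding ins_def by simp_all

lemma ins_mult_del: "ins * del = 1\<^sub>m (n - 1)"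
proof (rule eq_matI)
  fix k k' assume "k < dim_row (1\<^sub>m (n - 1) :: 'a mat)" "k' < dim_col (1\<^sub>m (n - 1) :: 'a mat)"
  hence kk: "k < n - 1" "k' < n - 1" by simp_all
  have "(ins * del) $$ (k, k') = (\<Sum>j<n. ins $$ (k, j) * (if j = skip k' then 1 else 0))"
    using kk by (simp add: scalar_prod_def atLeast0LessThan)
  also have "\<dots> = ins $$ (k, skip k')"
    using skip_less[OF kk(2)] by (simp add: if_distrib[of "\<lambda>x. _ * x"] sum.delta' cong: if_cong)
  also have "\<dots> = 1\<^sub>m (n - 1) $$ (k, k')"
    using kk skip_less[OF kk(2)] skip_neq[of k'] skip_inj by (auto simp: ins_def)
  finally show "(ins * del) $$ (k, k') = 1\<^sub>m (n - 1) $$ (k, k')" .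
qed simp_all

lemma del_mult_ins: "del * ins = 1\<^sub>m n - (1 / v $ p) \<cdot>\<^sub>m outer_prod_mat v (unit_vec n p)"
proof (rule eq_matI)
  fix j j' assume "j < dim_row (1\<^sub>m n - (1 / v $ p) \<cdot>\<^sub>m outer_prod_mat v (unit_vec n p))"
    "j' < dim_col (1\<^sub>m n - (1 / v $ p) \<cdot>\<^sub>m outer_prod_mat v (unit_vec n p))"
  hence jj: "j < n" "j' < n" using v by simp_all
  have "(del * ins) $$ (j, j') = (\<Sum>k<n - 1. (if j = skip k then 1 else 0) * ins $$ (k, j'))"
    using jj by (simp add: scalar_prod_def atLeast0LessThan)
  also have "\<dots> = (\<Sum>k<n - 1. if j \<noteq> p \<and> k = unskip j then ins $$ (k, j') else 0)"
    using jj skip_eq_iff by (intro sum.cong) auto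
  also have "\<dots> = (if j \<noteq> p then ins $$ (unskip j, j') else 0)"
    using unskip_less[OF jj(1)] by (simp add: sum.delta')
  also have "\<dots> = (1\<^sub>m n - (1 / v $ p) \<cdot>\<^sub>m outer_prod_mat v (unit_vec n p)) $$ (j, j')"
    using jj v v_p unskip_less[OF jj(1)] skip_unskip by (auto simp: ins_def unit_vec_def)
  finally show "(del * ins) $$ (j, j')
      = (1\<^sub>m n - (1 / v $ p) \<cdot>\<^sub>m outer_prod_mat v (unit_vec n p)) $$ (j, j')" .
qed (use v in simp_all)

lemma ins_mult_vec: "ins *\<^sub>v v = 0\<^sub>v (n - 1)"
proof (rule eq_vecI)
  fix k assume "k < dim_vec (0\<^sub>v (n - 1) :: 'a vec)"
  hence k: "k < n - 1" by simp
  have "(ins *\<^sub>v v) $ k = (\<Sum>j<n. ((if j = skip k then 1 else 0)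
      - (if j = p then v $ skip k / v $ p else 0)) * v $ j)"
    using k v by (simp add: ins_def scalar_prod_def atLeast0LessThan)
  also have "\<dots> = v $ skip k - v $ skip k / v $ p * v $ p"
    using skip_less[OF k] p
    by (simp add: left_diff_distrib sum_subtractf if_distrib[of "\<lambda>x. x * _"] sum.delta' cong: if_cong)
  also have "\<dots> = 0" using v_p by simp
  finally show "(ins *\<^sub>v v) $ k = 0\<^sub>v (n - 1) $ k" using k by simp
qed simp

lemma mult_del_ins:
  assumes X: "X \<in> carrier_mat m n" and Xv: "X *\<^sub>v v = 0\<^sub>v m"
  shows "X * del * ins = X"
proof -
  have "X * del * ins = X * (1\<^sub>m n - (1 / v $ p) \<cdot>\<^sub>m outer_prod_mat v (unit_vec n p))"
    using X by (simp add: assoc_mult_mat[OF X del_carrier ins_carrier] del_mult_ins)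
  also have "\<dots> = X - (1 / v $ p) \<cdot>\<^sub>m outer_prod_mat (X *\<^sub>v v) (unit_vec n p)"
  proof -
    have O: "outer_prod_mat v (unit_vec n p) \<in> carrier_mat n n" using v by simp
    have "X * (1\<^sub>m n - (1 / v $ p) \<cdot>\<^sub>m outer_prod_mat v (unit_vec n p))
        = X * 1\<^sub>m n - X * ((1 / v $ p) \<cdot>\<^sub>m outer_prod_mat v (unit_vec n p))"
      using O by (intro mult_minus_distrib_mat[OF X]) auto
    thus ?thesis using X by (simp add: mult_smult_distrib[OF X O] mult_outer_prod_mat[OF X v])
  qed
  also have "\<dots> = X" using X Xv by (simp add: mat_eq_iff)
  finally show ?thesis .
qed

lemma bij_betw_mult_del:
  "bij_betw (\<lambda>X. X * del) {X \<in> carrier_mat m n. X *\<^sub>v v = 0\<^sub>v m} (carrier_mat m (n - 1))"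
proof (rule bij_betw_byWitness[where f' = "\<lambda>Y. Y * ins"])
  show "\<forall>Y\<in>carrier_mat m (n - 1). Y * ins * del = Y"
    by (simp add: assoc_mult_mat[OF _ ins_carrier del_carrier] ins_mult_del)
  show "(\<lambda>Y. Y * ins) ` carrier_mat m (n - 1) \<subseteq> {X \<in> carrier_mat m n. X *\<^sub>v v = 0\<^sub>v m}"
    using v by (auto simp: assoc_mult_mat_vec[OF _ ins_carrier] ins_mult_vec)
qed (auto simp: mult_del_ins)

lemma Rk_del: "Rk del = n - 1"
proof -
  interpret VS: vec_space "TYPE('a)" n .
  have cols: "cols del = map (\<lambda>k. unit_vec n (skip k)) [0..<n - 1]"
    by (rule nth_equalityI) (auto simp: del_def skip_less unit_vec_def intro!: eq_vecI)
  have "inj_on (\<lambda>k. unit_vec n (skip k) :: 'a vec) {0..<n - 1}"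
    by (rule inj_onI) (metis skip_inj skip_less atLeastLessThan_iff unit_vec_eq)
  hence "distinct (cols del)" unfolding cols distinct_map by simp
  moreover have "set (cols del) \<subseteq> set (unit_vecs n)"
    unfolding cols unit_vecs_def using skip_less by auto
  hence "VS.lin_indpt (set (cols del))"
    using VS.unit_vecs_basis VS.subset_li_is_li unfolding VS.basis_def by blast
  ultimately show ?thesis unfolding Rk_def using VS.lin_indpt_full_rank[OF del_carrier] by simp
qed

end

lemma Rk_one_mat: "Rk (1\<^sub>m m :: 'a::field mat) = m"
  unfolding Rk_def using vec_space.det_rank_iff[of "1\<^sub>m m :: 'a mat" m] by simp

lemma linear_code_image_mult:
  fixes C :: "'a::field mat set"
  assumes lc: "linear_code m n C" and B: "B \<in> carrier_mat n n'"
  shows "linear_code m n' ((\<lambda>X. X * B) ` C)"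
proof -
  let ?M = "module_mat TYPE('a) m n"
  interpret M: vectorspace class_ring ?M by (rule matrix_vs)
  have sub: "VectorSpace.subspace class_ring C ?M" using lc unfolding linear_code_def .
  have C: "C \<subseteq> carrier_mat m n" by (rule linear_code_carrier[OF lc])
  have hom: "(\<lambda>X. X * B) \<in> LinearCombinations.module_hom class_ring (M.vs C) (module_mat TYPE('a) m n')"
    unfolding LinearCombinations.module_hom_def
    using C B by (auto simp: module_mat_simps add_mult_distrib_mat[OF subsetD[OF C] subsetD[OF C] B]
        mult_smult_assoc_mat[OF subsetD[OF C] B])
  interpret T: linear_map class_ring "M.vs C" "module_mat TYPE('a) m n'" "\<lambda>X. X * B"
    using M.subspace_is_vs[OF sub] matrix_vs hom
    unfolding linear_map_def mod_hom_def mod_hom_axioms_def vectorspace_def by blast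
  show ?thesis unfolding linear_code_def using T.imT_is_subspace unfolding T.im_def by simp
qed

lemma degenerate_if_common_null_vector:
  fixes C :: "'a::field mat set"
  assumes lc: "linear_code m n C" and null: "common_null_vector m n C v"
  shows "degenerate m n C"
proof -
  have v: "v \<in> carrier_vec n" "v \<noteq> 0\<^sub>v n" and Cv: "\<forall>X\<in>C. X *\<^sub>v v = 0\<^sub>v m"
    using null unfolding common_null_vector_def by auto
  obtain p where p: "p < n" "v $ p \<noteq> 0" using vec_nonzero_entry[OF v] by blast
  interpret column_deletion n p v using p v by unfold_locales
  let ?V = "rank_supp m n (vec_module.orthogonal_complement n {v})"
  let ?W = "rank_supp m (n - 1) (carrier_vec (n - 1)) :: 'a mat set"
  have V: "?V = {X \<in> carrier_mat m n. X *\<^sub>v v = 0\<^sub>v m}"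
    using rank_supp_orthogonal_complement[of "{v}" n m] v by simp
  have W: "?W = carrier_mat m (n - 1)" by (rule rank_supp_carrier)
  have CV: "C \<subseteq> ?V" using V linear_code_carrier[OF lc] Cv by auto
  have bij: "bij_betw (\<lambda>X. 1\<^sub>m m * X * del) ?V ?W"
    unfolding V W using bij_betw_mult_del
    by (rule bij_betw_cong[THEN iffD2, rotated]) (auto simp: left_mult_one_mat)
  have "security_equivalent m n C (n - 1) ((\<lambda>X. X * del) ` C)"
    unfolding security_equivalent_def
  proof (intro exI conjI)
    show "is_rank_support_space m n ?V"
      using vec_space.orthogonal_complement_subspace[of "{v}" n] v
      unfolding is_rank_support_space_def vec_subspace_def by auto
    show "is_rank_support_space m (n - 1) ?W"
      unfolding is_rank_support_space_def using vec_subspace_carrier by blast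
    show "(\<lambda>X. 1\<^sub>m m * X * del) ` C = (\<lambda>X. X * del) ` C"
      using CV V by (intro image_cong) auto
    then show "(\<lambda>X. X * del) ` C \<subseteq> ?W" using CV bij_betw_imp_surj_on[OF bij] by blast
  qed (use CV bij Rk_one_mat Rk_del in auto)
  moreover have "linear_code m (n - 1) ((\<lambda>X. X * del) ` C)"
    by (rule linear_code_image_mult[OF lc del_carrier])
  moreover have "n - 1 < n" using p(1) by simp
  ultimately show ?thesis unfolding degenerate_def by blast
qed

lemma degenerate_iff_common_null_vector:
  fixes C :: "'a::field mat set"
  assumes "0 < m" and "linear_code m n C"
  shows "degenerate m n C \<longleftrightarrow> (\<exists>v. common_null_vector m n C v)"
  using common_null_vector_if_degenerate[OF assms(1)] degenerate_if_common_null_vector[OF assms(2)]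
  by blast

theorem proposition12:
  fixes C :: "'a::field mat set" and m n :: nat
  assumes "0 < m" and "0 < n"
    and "linear_code m n C"
  shows "(mat_dim m n (dual_code m n C) \<ge> m \<longrightarrow>
            (degenerate m n C \<longleftrightarrow> d_M m n m (dual_code m n C) = 1))
       \<and> (d_R (dual_code m n C) > 1 \<longrightarrow> \<not> degenerate m n C)"
proof -
  have C: "C \<subseteq> carrier_mat m n" by (rule linear_code_carrier[OF assms(3)])
  show ?thesis
    using degenerate_iff_common_null_vector[OF assms(1,3)] d_M_dual_code_eq_1_iff[OF C assms(1)] d_R_dual_code_le_1[OF C assms(1)]
    by (meson leD)
qed

end
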